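(* Let $G$ be an $n$-vertex graph with maximum degree $\Delta\le 2^{\sqrt{\log n}}$. Run the following Phase I for $\kappa$ stages starting from $I_0=\emptyset$: in stage $i$, with $A_i = V\setminus\hat\Gamma(I_i)$ the active vertices, each $v\in A_i$ independently selects itself with probability $\frac{1}{\Delta+1}$, and $I_{i+1}=I_i\cup\{v\in A_i : v$ is the only vertex of its closed neighborhood in $G(A_i)$ that selected itself$\}$. Let $U=\{v\in A_\kappa : \deg_{G(A_\kappa)}(v)\ge \Delta/2\}$. There is a constant $c_6$ such that: (i) if $\kappa = c_6\sqrt{\log n}$, then with high probability every connected component of $G(U)$ has weak diameter less than $5\sqrt{\log n}$; (ii) if $\kappa = c_6\log\Delta$, then with high probability every connected component of $G(U)$ has fewer than $\Delta^4\log n$ vertices.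
   Context: $\hat\Gamma(X)$ is $X$ together with all neighbors of $X$. $G(U)$ is the subgraph induced by $U$. The weak diameter of $G(U)$ (or of a component with vertex set $C$) is $\max\{\operatorname{dist}_G(u,v): u,v\in C\}$, distances measured in the whole graph $G$. Logarithms are base 2. "With high probability" means with probability at least $1-1/n^{c}$ for an arbitrarily large fixed constant $c$ (with $c_6$ depending on $c$). *)

theory Defs
  imports "HOL-Probability.Probability"
begin

definition simple_graph :: "nat set \<Rightarrow> (nat \<Rightarrow> nat \<Rightarrow> bool) \<Rightarrow> bool" where
  "simple_graph V E \<longleftrightarrow> finite V \<and> (\<forall>u v. E u v \<longrightarrow> u \<in> V \<and> v \<in> V \<and> u \<noteq> v \<and> E v u)"

definition degree :: "nat set \<Rightarrow> (nat \<Rightarrow> nat \<Rightarrow> bool) \<Rightarrow> nat \<Rightarrow> nat" where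
  "degree V E v = card {u\<in>V. E v u}"

definition max_degree :: "nat set \<Rightarrow> (nat \<Rightarrow> nat \<Rightarrow> bool) \<Rightarrow> nat" where
  "max_degree V E = Max (degree V E ` V)"

definition closed_nbhd :: "nat set \<Rightarrow> (nat \<Rightarrow> nat \<Rightarrow> bool) \<Rightarrow> nat set \<Rightarrow> nat set" where
  "closed_nbhd V E X = X \<union> {v\<in>V. \<exists>u\<in>X. E u v}"

definition active :: "nat set \<Rightarrow> (nat \<Rightarrow> nat \<Rightarrow> bool) \<Rightarrow> nat set \<Rightarrow> nat set" where
  "active V E I = V - closed_nbhd V E I"

(* Phase I: sigma (i,v) = True iff vertex v selects itself in stage i.
   phaseI V E sigma i is the set I_i. *)
fun phaseI :: "nat set \<Rightarrow> (nat \<Rightarrow> nat \<Rightarrow> bool) \<Rightarrow> (nat \<times> nat \<Rightarrow> bool) \<Rightarrow> nat \<Rightarrow> nat set" where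
  "phaseI V E \<sigma> 0 = {}"
| "phaseI V E \<sigma> (Suc i) =
     (let I = phaseI V E \<sigma> i; A = active V E I
      in I \<union> {v\<in>A. \<sigma> (i, v) \<and> (\<forall>u\<in>A. E v u \<longrightarrow> \<not> \<sigma> (i, u))})"

definition U_set :: "nat set \<Rightarrow> (nat \<Rightarrow> nat \<Rightarrow> bool) \<Rightarrow> (nat \<times> nat \<Rightarrow> bool) \<Rightarrow> nat \<Rightarrow> nat set" where
  "U_set V E \<sigma> \<kappa> =
     (let A = active V E (phaseI V E \<sigma> \<kappa>)
      in {v\<in>A. real (card {u\<in>A. E v u}) \<ge> real (max_degree V E) / 2})"

definition coins :: "nat set \<Rightarrow> nat \<Rightarrow> real \<Rightarrow> (nat \<times> nat \<Rightarrow> bool) pmf" where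
  "coins V \<kappa> p = Pi_pmf ({..<\<kappa>} \<times> V) False (\<lambda>_. bernoulli_pmf p)"

definition components :: "(nat \<Rightarrow> nat \<Rightarrow> bool) \<Rightarrow> nat set \<Rightarrow> nat set set" where
  "components E U = {{w. (\<lambda>x y. E x y \<and> x \<in> U \<and> y \<in> U)\<^sup>*\<^sup>* u w} | u. u \<in> U}"

definition gdist :: "(nat \<Rightarrow> nat \<Rightarrow> bool) \<Rightarrow> nat \<Rightarrow> nat \<Rightarrow> nat" where
  "gdist E u v = (LEAST k. (E ^^ k) u v)"

definition weak_diam :: "(nat \<Rightarrow> nat \<Rightarrow> bool) \<Rightarrow> nat set \<Rightarrow> nat" where
  "weak_diam E C = Max {gdist E u v | u v. u \<in> C \<and> v \<in> C}"

end

theory Submission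
  imports Defs
begin

(* A vertex that is still active and has at least Delta/2 active neighbours ("heavy") is
   knocked out in each stage with probability at least 1/32, because with that probability
   some active neighbour selects itself alone.  These events depend only on coins within
   distance 2, so for a 4-separated set S of vertices all of S stays heavy for k stages with
   probability at most (31/32)^(k |S|).

   If a component C of G(U) is large (in weak diameter, resp. in size), a maximal 4-separated
   subset of C is a "9-linked" set of many vertices of U; from it we extract a 9-linked
   walk visiting exactly m such vertices.  There are at most n (Delta+1)^(18 m) such walks,
   so a union bound gives failure probability n (Delta+1)^(18 m) (31/32)^(kappa m), which
   is at most n^-c for kappa = c6 sqrt(log n) with m ~ sqrt(log n)/4 (part (i)) and for
   kappa = c6 log Delta with m ~ log n / 16 (part (ii)). *)

definition reach :: "(nat \<Rightarrow> nat \<Rightarrow> bool) \<Rightarrow> nat \<Rightarrow> nat \<Rightarrow> nat \<Rightarrow> bool" where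
  "reach E k x y \<longleftrightarrow> (\<exists>j\<le>k. (E ^^ j) x y)"

lemma reach_refl: "reach E k x x"
  unfolding reach_def by (auto intro!: exI[of _ 0])

lemma reach_edge: "E x y \<Longrightarrow> k \<ge> 1 \<Longrightarrow> reach E k x y"
  unfolding reach_def by (auto intro!: exI[of _ 1])

lemma reach_trans: "reach E a x y \<Longrightarrow> reach E b y z \<Longrightarrow> reach E (a + b) x z"
  unfolding reach_def by (auto intro: relpowp_trans add_mono)

lemma reach_mono: "reach E a x y \<Longrightarrow> a \<le> b \<Longrightarrow> reach E b x y"
  unfolding reach_def using le_trans by blast

lemma simple_graph_sym: "simple_graph V E \<Longrightarrow> E u v \<Longrightarrow> E v u"
  unfolding simple_graph_def by auto

lemma simple_graph_vertices: "simple_graph V E \<Longrightarrow> E u v \<Longrightarrow> u \<in> V \<and> v \<in> V"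
  unfolding simple_graph_def by auto

lemma relpowp_sym:
  assumes "\<And>u v. E u v \<Longrightarrow> E v u"
  shows "(E ^^ j) x y \<Longrightarrow> (E ^^ j) y x"
proof (induction j arbitrary: y)
  case 0 thus ?case by auto
next
  case (Suc j)
  then obtain z where "(E ^^ j) x z" "E z y" by (auto elim: relpowp_Suc_E)
  thus ?case using Suc.IH assms by (meson relpowp_Suc_I2)
qed

lemma reach_sym: "simple_graph V E \<Longrightarrow> reach E k x y \<Longrightarrow> reach E k y x"
  unfolding reach_def using relpowp_sym[of E] simple_graph_sym by metis

lemma reach_vertex: assumes G: "simple_graph V E" and x: "x \<in> V" and r: "reach E k x y"
  shows "y \<in> V"
proof -
  have "(E ^^ j) x y \<Longrightarrow> y \<in> V" for j
  proof (induction j arbitrary: y)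
    case 0 thus ?case using x by auto
  next
    case (Suc j)
    then obtain z where "E z y" by (auto elim: relpowp_Suc_E)
    thus ?case using simple_graph_vertices[OF G] by auto
  qed
  thus ?thesis using r unfolding reach_def by auto
qed

lemma reach_two_meet:
  "simple_graph V E \<Longrightarrow> reach E 2 s w \<Longrightarrow> reach E 2 t w \<Longrightarrow> reach E 4 s t"
  using reach_trans[of E 2 s w 2 t] reach_sym by fastforce

lemma gdist_le_reach: assumes "reach E k u v" shows "gdist E u v \<le> k"
proof -
  obtain j where "j \<le> k" "(E ^^ j) u v" using assms unfolding reach_def by auto
  thus ?thesis unfolding gdist_def using Least_le[of "\<lambda>j. (E ^^ j) u v" j] by linarith
qed

lemma degree_le_max: "simple_graph V E \<Longrightarrow> v \<in> V \<Longrightarrow> degree V E v \<le> max_degree V E"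
  unfolding max_degree_def simple_graph_def by auto

lemma neighbours_card_le: assumes "simple_graph V E" "v \<in> V" "A \<subseteq> V"
  shows "card {u\<in>A. E v u} \<le> max_degree V E"
proof -
  have "card {u\<in>A. E v u} \<le> card {u\<in>V. E v u}"
    using assms by (intro card_mono) (auto simp: simple_graph_def)
  thus ?thesis using degree_le_max[OF assms(1,2)] unfolding degree_def by simp
qed

lemma ball_card:
  assumes G: "simple_graph V E" and x: "x \<in> V"
  shows "finite {y. reach E k x y} \<and> card {y. reach E k x y} \<le> (max_degree V E + 1) ^ k"
proof (induction k)
  case 0
  have "{y. reach E 0 x y} = {x}" unfolding reach_def by auto
  thus ?case by simp
next
  case (Suc k)
  let ?B = "{y. reach E k x y}"
  let ?N = "\<lambda>z. insert z {u\<in>V. E z u}"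
  have sub: "{y. reach E (Suc k) x y} \<subseteq> (\<Union>z\<in>?B. ?N z)"
  proof
    fix y assume "y \<in> {y. reach E (Suc k) x y}"
    then obtain j where j: "j \<le> Suc k" "(E ^^ j) x y" unfolding reach_def by auto
    show "y \<in> (\<Union>z\<in>?B. ?N z)"
    proof (cases j)
      case 0 thus ?thesis using j reach_refl[of E k x] by auto
    next
      case (Suc i)
      then obtain z where "(E ^^ i) x z" "E z y" using j by (auto elim: relpowp_Suc_E)
      moreover have "reach E k x z" using \<open>(E ^^ i) x z\<close> Suc j unfolding reach_def by auto
      ultimately show ?thesis using simple_graph_vertices[OF G] by blast
    qed
  qed
  have BV: "?B \<subseteq> V" using reach_vertex[OF G x] by auto
  have fin: "finite (\<Union>z\<in>?B. ?N z)" using Suc G by (auto simp: simple_graph_def)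
  have "card {y. reach E (Suc k) x y} \<le> card (\<Union>z\<in>?B. ?N z)" by (rule card_mono[OF fin sub])
  also have "\<dots> \<le> (\<Sum>z\<in>?B. card (?N z))" by (rule card_UN_le) (use Suc in auto)
  also have "\<dots> \<le> (\<Sum>z\<in>?B. max_degree V E + 1)"
  proof (rule sum_mono)
    fix z assume "z \<in> ?B"
    hence "z \<in> V" using BV by auto
    have "card (?N z) \<le> card {u\<in>V. E z u} + 1" by (simp add: card_insert_le_m1 card_insert_if)
    thus "card (?N z) \<le> max_degree V E + 1" using neighbours_card_le[OF G \<open>z\<in>V\<close>, of V] by simp
  qed
  also have "\<dots> = card ?B * (max_degree V E + 1)" by simp
  also have "\<dots> \<le> (max_degree V E + 1) ^ Suc k" using Suc by (metis mult.commute mult_le_mono2 power_Suc)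
  finally show ?case using finite_subset[OF sub fin] by simp
qed

text \<open>A set is 4-separated if no two of its vertices are within distance 4; then their
  radius-2 neighbourhoods, which determine their fate in a stage, are disjoint.\<close>
definition separated :: "(nat \<Rightarrow> nat \<Rightarrow> bool) \<Rightarrow> nat set \<Rightarrow> bool" where
  "separated E S \<longleftrightarrow> (\<forall>s\<in>S. \<forall>t\<in>S. s \<noteq> t \<longrightarrow> \<not> reach E 4 s t)"

lemma separated_subset: "separated E S \<Longrightarrow> T \<subseteq> S \<Longrightarrow> separated E T"
  unfolding separated_def by blast

lemma pair_prob_le:
  fixes A :: "'a pmf" and B :: "'b pmf"
  assumes "\<And>a. measure_pmf.prob B {b. (a,b) \<in> X} \<le> (if a \<in> P then r else 0)" "r \<ge> 0"
  shows "measure_pmf.prob (pair_pmf A B) X \<le> r * measure_pmf.prob A P"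
proof -
  have "emeasure (measure_pmf (pair_pmf A B)) X = (\<integral>\<^sup>+x. indicator X x \<partial>pair_pmf A B)" by simp
  also have "\<dots> = (\<integral>\<^sup>+a. \<integral>\<^sup>+b. indicator X (a, b) \<partial>B \<partial>A)" by (rule nn_integral_pair_pmf')
  also have "\<dots> = (\<integral>\<^sup>+a. emeasure (measure_pmf B) {b. (a,b) \<in> X} \<partial>A)"
  proof (rule nn_integral_cong)
    fix a
    have "(\<lambda>b. indicator X (a, b) :: ennreal) = indicator {b. (a,b) \<in> X}" by (auto simp: indicator_def)
    thus "(\<integral>\<^sup>+b. indicator X (a, b) \<partial>B) = emeasure (measure_pmf B) {b. (a,b) \<in> X}" by simp
  qed
  also have "\<dots> \<le> (\<integral>\<^sup>+a. ennreal r * indicator P a \<partial>A)"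
  proof (rule nn_integral_mono)
    fix a
    have "emeasure (measure_pmf B) {b. (a,b) \<in> X} = ennreal (measure_pmf.prob B {b. (a,b) \<in> X})"
      by (simp add: measure_pmf.emeasure_eq_measure)
    also have "\<dots> \<le> ennreal (if a \<in> P then r else 0)" using assms(1)[of a] by (rule ennreal_leI)
    also have "\<dots> = ennreal r * indicator P a" by (auto simp: indicator_def)
    finally show "emeasure (measure_pmf B) {b. (a,b) \<in> X} \<le> ennreal r * indicator P a" .
  qed
  also have "\<dots> = ennreal r * emeasure (measure_pmf A) P" by (rule nn_integral_cmult_indicator) simp
  also have "\<dots> = ennreal (r * measure_pmf.prob A P)"
    using assms(2) by (simp add: measure_pmf.emeasure_eq_measure ennreal_mult)
  finally show ?thesis by (simp add: measure_pmf.emeasure_eq_measure assms(2))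
qed

lemma prob_single_selected:
  assumes fB: "finite B" and x: "x \<in> B" and Y: "Y \<subseteq> B" "x \<notin> Y" and p: "0 \<le> p" "p \<le> 1"
  shows "measure_pmf.prob (Pi_pmf B False (\<lambda>_. bernoulli_pmf p)) {g. g x \<and> (\<forall>y\<in>Y. \<not> g y)}
           = p * (1 - p) ^ card Y"
proof -
  define X where "X z = (if z = x then {True} else if z \<in> Y then {False} else UNIV)" for z
  have eq: "{g. g x \<and> (\<forall>y\<in>Y. \<not> g y)} = Pi B X"
    using x Y unfolding X_def by (auto simp: Pi_def)
  have fY: "finite Y" using fB Y finite_subset by blast
  have "measure_pmf.prob (Pi_pmf B False (\<lambda>_. bernoulli_pmf p)) (Pi B X)
      = (\<Prod>z\<in>B. measure_pmf.prob (bernoulli_pmf p) (X z))"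
    by (rule measure_Pi_pmf_Pi[OF fB])
  also have "\<dots> = (\<Prod>z\<in>insert x Y. measure_pmf.prob (bernoulli_pmf p) (X z))"
    by (rule prod.mono_neutral_right) (use fB x Y in \<open>auto simp: X_def\<close>)
  also have "\<dots> = p * (\<Prod>z\<in>Y. measure_pmf.prob (bernoulli_pmf p) (X z))"
    using fY Y p by (simp add: X_def measure_pmf_single)
  also have "(\<Prod>z\<in>Y. measure_pmf.prob (bernoulli_pmf p) (X z)) = (\<Prod>z\<in>Y. 1 - p)"
    using Y p by (intro prod.cong refl) (auto simp: X_def measure_pmf_single)
  finally show ?thesis using eq by simp
qed

section \<open>One stage: heavy vertices are knocked out with constant probability\<close>

text \<open>In a stage with active set A and selections tau, vertex s is knocked out if some vertex
  of its closed neighbourhood in G(A) selects itself and no active neighbour of it does: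
  that vertex joins I, so s ceases to be active.\<close>
definition knocked_out :: "(nat \<Rightarrow> nat \<Rightarrow> bool) \<Rightarrow> nat set \<Rightarrow> (nat \<Rightarrow> bool) \<Rightarrow> nat \<Rightarrow> bool" where
  "knocked_out E A \<tau> s \<longleftrightarrow> (\<exists>u\<in>A. (u = s \<or> E s u) \<and> \<tau> u \<and> (\<forall>w\<in>A. E u w \<longrightarrow> \<not> \<tau> w))"

lemma knocked_out_local:
  assumes "\<And>w. reach E 2 s w \<Longrightarrow> \<tau> w = \<tau>' w"
  shows "knocked_out E A \<tau> s = knocked_out E A \<tau>' s"
proof -
  have near: "reach E 1 s u" if "u = s \<or> E s u" for u
    using that reach_refl reach_edge by auto
  have r1: "reach E 2 s u" if "u = s \<or> E s u" for u
    using reach_mono[OF near[OF that]] by simp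
  have r2: "reach E 2 s w" if "u = s \<or> E s u" "E u w" for u w
    using reach_trans[OF near[OF that(1)] reach_edge[of E u w 1, OF that(2)]] by (simp add: numeral_2_eq_2)
  show ?thesis unfolding knocked_out_def using assms r1 r2 by metis
qed

lemma one_plus_inverse_power_le: assumes "(D::nat) \<ge> 1" shows "(1 + 1 / real D) ^ (2 * D) \<le> 8"
proof -
  have "(1 + 1 / real D) ^ D \<le> exp (1 / real D) ^ D"
    by (intro power_mono exp_ge_add_one_self) auto
  also have "\<dots> = exp 1" using assms by (simp add: exp_of_nat_mult[symmetric])
  finally have a: "(1 + 1 / real D) ^ D \<le> exp 1" .
  have "(1 + 1 / real D) ^ (2 * D) = ((1 + 1 / real D) ^ D)^2" by (simp add: power_mult mult.commute)
  also have "\<dots> \<le> (exp 1)^2" using a by (intro power_mono) auto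
  also have "\<dots> \<le> (272/100)^2" using e_less_272 by (intro power_mono) auto
  also have "\<dots> \<le> 8" by (simp add: power2_eq_square)
  finally show ?thesis .
qed

text \<open>The arithmetic behind the constant 1/32: at least Delta/2 candidates, each succeeding with
  probability at least p (1-p)^(2 Delta) with p = 1/(Delta+1).\<close>
lemma selection_probability_bound:
  assumes D: "(D::nat) \<ge> 1" and p: "p = 1 / (real D + 1)" and d: "real d \<ge> real D / 2"
  shows "real d * (p * (1 - p) ^ (2 * D)) \<ge> 1/32"
proof -
  have Dr: "real D \<ge> 1" using D by simp
  have a: "real d * p \<ge> 1/4" using d Dr unfolding p by (simp add: field_simps)
  have "1 - p = 1 / (1 + 1 / real D)" unfolding p using Dr by (simp add: field_simps)
  hence "(1 - p) ^ (2 * D) = 1 / (1 + 1 / real D) ^ (2 * D)" by (simp add: power_divide)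
  moreover have "(1 + 1 / real D) ^ (2 * D) \<le> 8" by (rule one_plus_inverse_power_le[OF D])
  moreover have "(1 + 1 / real D) ^ (2 * D) > 0" by (intro zero_less_power) (simp add: add_pos_nonneg)
  ultimately have b: "(1 - p) ^ (2 * D) \<ge> 1/8" by (simp add: field_simps)
  have "(1/4) * (1/8) \<le> (real d * p) * (1 - p) ^ (2 * D)" using a b by (intro mult_mono) auto
  thus ?thesis by (simp add: mult.assoc)
qed

text \<open>The
  events "neighbour u is selected alone" for the different active neighbours u are disjoint.\<close>
lemma heavy_vertex_survival:
  assumes G: "simple_graph V E" and D: "max_degree V E \<ge> 1" and fB: "finite B"
    and inj: "inj_on h V" and AV: "A \<subseteq> V" and sA: "s \<in> A"
    and hB: "h ` {w\<in>V. reach E 2 s w} \<subseteq> B"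
    and heavy: "real (card {u\<in>A. E s u}) \<ge> real (max_degree V E) / 2"
    and p: "p = 1 / (real (max_degree V E) + 1)"
  shows "measure_pmf.prob (Pi_pmf B False (\<lambda>_. bernoulli_pmf p)) {g. \<not> knocked_out E A (g \<circ> h) s}
           \<le> 31/32"
proof -
  let ?D = "max_degree V E"
  let ?M = "Pi_pmf B False (\<lambda>_. bernoulli_pmf p)"
  define N where "N = {u\<in>A. E s u}"
  define W where "W u = ({w\<in>A. E s w} \<union> {w\<in>A. E u w}) - {u}" for u
  define F where "F u = {g. g (h u) \<and> (\<forall>y\<in>h ` W u. \<not> g y)}" for u
  have p01: "0 \<le> p" "p \<le> 1" using p by auto
  have sV: "s \<in> V" using sA AV by auto
  have finN: "finite N" using AV G unfolding N_def simple_graph_def by (auto intro: finite_subset)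
  have Fsub: "(\<Union>u\<in>N. F u) \<subseteq> {g. knocked_out E A (g \<circ> h) s}"
  proof
    fix g assume "g \<in> (\<Union>u\<in>N. F u)"
    then obtain u where u: "u \<in> N" "g \<in> F u" by auto
    have "w \<in> W u" if "w \<in> A" "E u w" for w
      using that simple_graph_vertices[OF G] G unfolding W_def simple_graph_def by auto
    hence "\<forall>w\<in>A. E u w \<longrightarrow> \<not> g (h w)" using u unfolding F_def by auto
    thus "g \<in> {g. knocked_out E A (g \<circ> h) s}" using u unfolding knocked_out_def N_def F_def by auto
  qed
  have disj: "disjoint_family_on F N"
    unfolding disjoint_family_on_def
  proof (intro ballI impI)
    fix u v assume uv: "u \<in> N" "v \<in> N" "u \<noteq> v"
    have "v \<in> W u" using uv unfolding W_def N_def by auto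
    thus "F u \<inter> F v = {}" unfolding F_def by auto
  qed
  have probF: "measure_pmf.prob ?M (F u) \<ge> p * (1 - p) ^ (2 * ?D)" if uN: "u \<in> N" for u
  proof -
    have uV: "u \<in> V" using uN AV unfolding N_def by auto
    have WV: "W u \<subseteq> V" using AV unfolding W_def by auto
    have su: "reach E 1 s u" using uN reach_edge unfolding N_def by auto
    have hu: "h u \<in> B" using hB uV reach_mono[OF su] by auto
    have "reach E 2 s w" if "w \<in> W u" for w
      using that reach_edge[of E s w 2] reach_trans[OF su reach_edge[of E u w 1]]
      unfolding W_def by (auto simp: numeral_2_eq_2)
    hence hW: "h ` W u \<subseteq> B" using hB WV by blast
    have nW: "h u \<notin> h ` W u" using inj uV WV unfolding W_def inj_on_def by auto
    have "card (W u) \<le> card {w\<in>A. E s w} + card {w\<in>A. E u w}"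
      unfolding W_def using card_Un_le card_Diff1_le G AV
      by (metis (no_types, lifting) finite_Diff finite_Un finite_subset le_trans
          simple_graph_def subset_iff)
    also have "\<dots> \<le> 2 * ?D"
      using neighbours_card_le[OF G sV AV] neighbours_card_le[OF G uV AV] by simp
    finally have cW: "card (h ` W u) \<le> 2 * ?D" using card_image[OF inj_on_subset[OF inj WV]] by simp
    have "measure_pmf.prob ?M (F u) = p * (1 - p) ^ card (h ` W u)"
      unfolding F_def by (rule prob_single_selected[OF fB hu hW nW p01])
    also have "\<dots> \<ge> p * (1 - p) ^ (2 * ?D)"
      using cW p01 by (intro mult_left_mono power_decreasing) auto
    finally show ?thesis .
  qed
  have "measure_pmf.prob ?M (\<Union>u\<in>N. F u) = (\<Sum>u\<in>N. measure_pmf.prob ?M (F u))"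
    by (rule measure_pmf.finite_measure_finite_Union[OF finN _ disj]) simp
  also have "\<dots> \<ge> real (card N) * (p * (1 - p) ^ (2 * ?D))"
    using sum_mono[of N "\<lambda>_. p * (1 - p) ^ (2 * ?D)", OF probF] by simp
  also have "real (card N) * (p * (1 - p) ^ (2 * ?D)) \<ge> 1/32"
    by (rule selection_probability_bound[OF D p]) (use heavy in \<open>simp add: N_def\<close>)
  finally have "measure_pmf.prob ?M {g. knocked_out E A (g \<circ> h) s} \<ge> 1/32"
    using measure_pmf.finite_measure_mono[OF Fsub] by (smt (verit) sets_measure_pmf UNIV_I)
  moreover have "{g. \<not> knocked_out E A (g \<circ> h) s} = UNIV - {g. knocked_out E A (g \<circ> h) s}" by auto
  ultimately show ?thesis using measure_pmf.prob_compl[of "{g. knocked_out E A (g \<circ> h) s}" ?M] by simp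
qed

text \<open>For a 4-separated set S of heavy active vertices, the events of surviving one stage are
  independent (they depend on disjoint radius-2 balls), so all of S survives with probability
  at most (31/32)^|S|.  Induction on S, splitting off the coins of the ball around the new vertex.\<close>
lemma separated_survival:
  assumes G: "simple_graph V E" and D: "max_degree V E \<ge> 1"
    and inj: "inj_on h V" and AV: "A \<subseteq> V"
    and p: "p = 1 / (real (max_degree V E) + 1)"
  shows "finite S \<Longrightarrow> S \<subseteq> A \<Longrightarrow> separated E S \<Longrightarrow>
    (\<forall>s\<in>S. real (card {u\<in>A. E s u}) \<ge> real (max_degree V E) / 2) \<Longrightarrow> finite I \<Longrightarrow>
    (\<forall>s\<in>S. h ` {w\<in>V. reach E 2 s w} \<subseteq> I) \<Longrightarrow>
    measure_pmf.prob (Pi_pmf I False (\<lambda>_. bernoulli_pmf p)) {g. \<forall>s\<in>S. \<not> knocked_out E A (g \<circ> h) s}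
      \<le> (31/32) ^ card S"
proof (induction S arbitrary: I rule: finite_induct)
  case empty thus ?case by simp
next
  case (insert s S)
  define B where "B = h ` {w\<in>V. reach E 2 s w}"
  define I' where "I' = I - B"
  have sepS: "separated E S" using insert.prems(2) by (rule separated_subset) auto
  have BI: "B \<subseteq> I" using insert.prems unfolding B_def by auto
  have fB: "finite B" using BI insert.prems(4) finite_subset by blast
  have fI': "finite I'" using insert.prems(4) unfolding I'_def by auto
  have sA: "s \<in> A" using insert.prems by auto
  have sV: "s \<in> V" using sA AV by auto
  have far: "h w \<notin> B" if tS: "t \<in> S" and wV: "w \<in> V" and tw: "reach E 2 t w" for t w
  proof
    assume "h w \<in> B"
    then obtain w' where w': "w' \<in> V" "reach E 2 s w'" "h w = h w'" unfolding B_def by auto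
    have "w = w'" using inj w' wV unfolding inj_on_def by auto
    hence "reach E 4 s t" using reach_two_meet[OF G w'(2)] tw by simp
    moreover have "s \<noteq> t" using tS insert.hyps by auto
    ultimately show False using insert.prems(2) tS unfolding separated_def by auto
  qed
  have split: "I = B \<union> I'" "B \<inter> I' = {}" using BI unfolding I'_def by auto
  let ?bern = "\<lambda>_. bernoulli_pmf p"
  let ?mg = "\<lambda>(f,g) x. if x \<in> B then f x else (g x :: bool)"
  have PI: "Pi_pmf I False ?bern = map_pmf ?mg (pair_pmf (Pi_pmf B False ?bern) (Pi_pmf I' False ?bern))"
    unfolding split(1) by (rule Pi_pmf_union[OF fB fI' split(2)])
  define R1 where "R1 = {f. \<not> knocked_out E A (f \<circ> h) s}"
  define R2 where "R2 = {g. \<forall>t\<in>S. \<not> knocked_out E A (g \<circ> h) t}"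
  have sub: "?mg -` {g. \<forall>t\<in>insert s S. \<not> knocked_out E A (g \<circ> h) t} \<subseteq> R1 \<times> R2"
  proof
    fix fg assume a: "fg \<in> ?mg -` {g. \<forall>t\<in>insert s S. \<not> knocked_out E A (g \<circ> h) t}"
    obtain f g where fg: "fg = (f,g)" by (cases fg)
    let ?m = "?mg (f,g)"
    have "knocked_out E A (?m \<circ> h) s = knocked_out E A (f \<circ> h) s"
      by (rule knocked_out_local) (use reach_vertex[OF G sV] in \<open>auto simp: B_def\<close>)
    moreover have "knocked_out E A (?m \<circ> h) t = knocked_out E A (g \<circ> h) t" if tS: "t \<in> S" for t
    proof (rule knocked_out_local)
      fix w assume tw: "reach E 2 t w"
      have "w \<in> V" using reach_vertex[OF G _ tw] tS insert.prems(1) AV by auto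
      thus "(?m \<circ> h) w = (g \<circ> h) w" using far[OF tS _ tw] by simp
    qed
    ultimately show "fg \<in> R1 \<times> R2" using a fg unfolding R1_def R2_def by auto
  qed
  have IH: "measure_pmf.prob (Pi_pmf I' False ?bern) R2 \<le> (31/32) ^ card S"
    unfolding R2_def
  proof (rule insert.IH)
    show "\<forall>t\<in>S. h ` {w \<in> V. reach E 2 t w} \<subseteq> I'"
      using insert.prems(5) far unfolding I'_def by blast
  qed (use insert.prems fI' sepS in auto)
  have S1: "measure_pmf.prob (Pi_pmf B False ?bern) R1 \<le> 31/32"
    unfolding R1_def
    by (rule heavy_vertex_survival[OF G D fB inj AV sA _ _ p]) (use insert.prems in \<open>auto simp: B_def\<close>)
  have "measure_pmf.prob (Pi_pmf I False ?bern) {g. \<forall>t\<in>insert s S. \<not> knocked_out E A (g \<circ> h) t}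
      = measure_pmf.prob (pair_pmf (Pi_pmf B False ?bern) (Pi_pmf I' False ?bern))
          (?mg -` {g. \<forall>t\<in>insert s S. \<not> knocked_out E A (g \<circ> h) t})"
    unfolding PI by simp
  also have "\<dots> \<le> measure_pmf.prob (pair_pmf (Pi_pmf B False ?bern) (Pi_pmf I' False ?bern)) (R1 \<times> R2)"
    by (rule measure_pmf.finite_measure_mono[OF sub]) simp
  also have "\<dots> \<le> measure_pmf.prob (Pi_pmf I' False ?bern) R2 * measure_pmf.prob (Pi_pmf B False ?bern) R1"
    by (rule pair_prob_le) auto
  also have "\<dots> \<le> (31/32) ^ card S * (31/32)"
    using IH S1 by (intro mult_mono) auto
  also have "\<dots> = (31/32) ^ card (insert s S)" using insert.hyps by simp
  finally show ?case .
qed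

section \<open>Many stages of Phase I\<close>

definition heavy_after :: "nat set \<Rightarrow> (nat \<Rightarrow> nat \<Rightarrow> bool) \<Rightarrow> (nat \<times> nat \<Rightarrow> bool) \<Rightarrow> nat \<Rightarrow> nat set \<Rightarrow> bool" where
  "heavy_after V E \<sigma> k S \<longleftrightarrow> (\<forall>s\<in>S. s \<in> active V E (phaseI V E \<sigma> k) \<and>
      real (card {u\<in>active V E (phaseI V E \<sigma> k). E s u}) \<ge> real (max_degree V E) / 2)"

lemma U_set_subset: "U_set V E \<sigma> \<kappa> \<subseteq> V"
  unfolding U_set_def active_def Let_def by auto

lemma heavy_after_U_set: "S \<subseteq> U_set V E \<sigma> \<kappa> \<Longrightarrow> heavy_after V E \<sigma> \<kappa> S"
  unfolding U_set_def heavy_after_def Let_def by auto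

lemma phaseI_cong: "(\<forall>i<k. \<forall>v\<in>V. \<sigma> (i,v) = \<sigma>' (i,v)) \<Longrightarrow> phaseI V E \<sigma> k = phaseI V E \<sigma>' k"
proof (induction k)
  case 0 thus ?case by simp
next
  case (Suc k)
  hence eq: "phaseI V E \<sigma> k = phaseI V E \<sigma>' k" by auto
  have AV: "active V E (phaseI V E \<sigma> k) \<subseteq> V" unfolding active_def by auto
  show ?case using Suc.prems AV by (simp add: Let_def eq) blast
qed

lemma active_shrinks: "active V E (phaseI V E \<sigma> (Suc k)) \<subseteq> active V E (phaseI V E \<sigma> k)"
  unfolding active_def closed_nbhd_def by (auto simp: Let_def)

text \<open>Staying heavy for k+1 stages means staying heavy for k stages and not being knocked out
  in stage k (active sets only shrink).\<close>
lemma heavy_after_Suc: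
  assumes G: "simple_graph V E" and g: "heavy_after V E \<sigma> (Suc k) S"
  shows "heavy_after V E \<sigma> k S \<and>
         (\<forall>s\<in>S. \<not> knocked_out E (active V E (phaseI V E \<sigma> k)) (\<lambda>v. \<sigma> (k,v)) s)"
proof
  let ?A = "active V E (phaseI V E \<sigma> k)"
  let ?A' = "active V E (phaseI V E \<sigma> (Suc k))"
  have sub: "?A' \<subseteq> ?A" by (rule active_shrinks)
  have fin: "finite ?A" using G unfolding simple_graph_def active_def by auto
  show "heavy_after V E \<sigma> k S"
    unfolding heavy_after_def
  proof
    fix s assume "s \<in> S"
    hence a: "s \<in> ?A'" "real (card {u\<in>?A'. E s u}) \<ge> real (max_degree V E) / 2"
      using g unfolding heavy_after_def by auto
    have "card {u\<in>?A'. E s u} \<le> card {u\<in>?A. E s u}" using sub fin by (intro card_mono) auto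
    thus "s \<in> ?A \<and> real (card {u\<in>?A. E s u}) \<ge> real (max_degree V E) / 2" using a sub by auto
  qed
  show "\<forall>s\<in>S. \<not> knocked_out E ?A (\<lambda>v. \<sigma> (k,v)) s"
  proof (intro ballI notI)
    fix s assume sS: "s \<in> S" and r: "knocked_out E ?A (\<lambda>v. \<sigma> (k,v)) s"
    have sA': "s \<in> ?A'" using g sS unfolding heavy_after_def by auto
    hence sV: "s \<in> V" unfolding active_def by auto
    obtain u where u: "u \<in> ?A" "u = s \<or> E s u" "\<sigma> (k,u)" "\<forall>w\<in>?A. E u w \<longrightarrow> \<not> \<sigma> (k,w)"
      using r unfolding knocked_out_def by auto
    have "u \<in> phaseI V E \<sigma> (Suc k)" using u by (simp add: Let_def)
    hence "s \<in> closed_nbhd V E (phaseI V E \<sigma> (Suc k))"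
      using u(2) sV simple_graph_sym[OF G] unfolding closed_nbhd_def by blast
    thus False using sA' unfolding active_def by auto
  qed
qed

lemma heavy_after_prob:
  assumes G: "simple_graph V E" and D: "max_degree V E \<ge> 1"
    and p: "p = 1 / (real (max_degree V E) + 1)"
    and fS: "finite S" and SV: "S \<subseteq> V" and sep: "separated E S"
  shows "measure_pmf.prob (coins V k p) {\<sigma>. heavy_after V E \<sigma> k S} \<le> (31/32) ^ (k * card S)"
proof (induction k)
  case 0 thus ?case by simp
next
  case (Suc k)
  let ?bern = "\<lambda>_::nat\<times>nat. bernoulli_pmf p"
  let ?I = "{..<k} \<times> V" and ?J = "{k} \<times> V"
  let ?H = "\<lambda>k. {\<sigma>. heavy_after V E \<sigma> k S}"
  have fV: "finite V" using G unfolding simple_graph_def by auto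
  have split: "{..<Suc k} \<times> V = ?I \<union> ?J" "?I \<inter> ?J = {}" by (auto simp: lessThan_Suc)
  let ?mg = "\<lambda>(f,g) x. if x \<in> ?I then f x else (g x :: bool)"
  have PI: "coins V (Suc k) p = map_pmf ?mg (pair_pmf (coins V k p) (Pi_pmf ?J False ?bern))"
    unfolding coins_def split(1) by (rule Pi_pmf_union) (use fV split(2) in auto)
  define h :: "nat \<Rightarrow> nat \<times> nat" where "h v = (k, v)" for v
  have "measure_pmf.prob (coins V (Suc k) p) (?H (Suc k))
      = measure_pmf.prob (pair_pmf (coins V k p) (Pi_pmf ?J False ?bern)) (?mg -` ?H (Suc k))"
    unfolding PI by simp
  also have "\<dots> \<le> (31/32) ^ card S * measure_pmf.prob (coins V k p) (?H k)"
  proof (rule pair_prob_le)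
    fix f
    have cong: "phaseI V E (?mg (f,g)) k = phaseI V E f k" for g
      by (rule phaseI_cong) auto
    let ?A = "active V E (phaseI V E f k)"
    have sub: "{g. (f,g) \<in> ?mg -` ?H (Suc k)} \<subseteq>
        {g. heavy_after V E f k S \<and> (\<forall>s\<in>S. \<not> knocked_out E ?A (g \<circ> h) s)}"
    proof
      fix g assume "g \<in> {g. (f,g) \<in> ?mg -` ?H (Suc k)}"
      hence "heavy_after V E (?mg (f,g)) (Suc k) S" by simp
      from heavy_after_Suc[OF G this] have a: "heavy_after V E (?mg (f,g)) k S"
        "\<forall>s\<in>S. \<not> knocked_out E (active V E (phaseI V E (?mg (f,g)) k)) (\<lambda>v. ?mg (f,g) (k,v)) s"
        by auto
      have "heavy_after V E f k S" using a(1) cong[of g] unfolding heavy_after_def by simp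
      moreover have "(\<lambda>v. ?mg (f,g) (k,v)) = g \<circ> h" by (auto simp: h_def)
      ultimately show "g \<in> {g. heavy_after V E f k S \<and> (\<forall>s\<in>S. \<not> knocked_out E ?A (g \<circ> h) s)}"
        using a(2) cong[of g] by simp
    qed
    show "measure_pmf.prob (Pi_pmf ?J False ?bern) {g. (f,g) \<in> ?mg -` ?H (Suc k)}
        \<le> (if f \<in> ?H k then (31/32) ^ card S else 0)"
    proof (cases "heavy_after V E f k S")
      case False
      hence "{g. (f,g) \<in> ?mg -` ?H (Suc k)} = {}" using sub by auto
      thus ?thesis using False by simp
    next
      case True
      have "measure_pmf.prob (Pi_pmf ?J False ?bern) {g. (f,g) \<in> ?mg -` ?H (Suc k)}
          \<le> measure_pmf.prob (Pi_pmf ?J False ?bern) {g. \<forall>s\<in>S. \<not> knocked_out E ?A (g \<circ> h) s}"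
        by (rule measure_pmf.finite_measure_mono) (use sub in auto)
      also have "\<dots> \<le> (31/32) ^ card S"
      proof (rule separated_survival[OF G D _ _ p fS])
        show "inj_on h V" unfolding h_def inj_on_def by auto
        show "?A \<subseteq> V" unfolding active_def by auto
        show "S \<subseteq> ?A" "\<forall>s\<in>S. real (max_degree V E) / 2 \<le> real (card {u \<in> ?A. E s u})"
          using True unfolding heavy_after_def by auto
        show "finite ?J" using fV by auto
        show "\<forall>s\<in>S. h ` {w \<in> V. reach E 2 s w} \<subseteq> ?J" unfolding h_def by auto
      qed (rule sep)
      finally show ?thesis using True by simp
    qed
  qed simp
  also have "\<dots> \<le> (31/32) ^ card S * (31/32) ^ (k * card S)"
    using Suc.IH by (intro mult_left_mono) auto
  also have "\<dots> = (31/32) ^ (Suc k * card S)" by (simp add: power_add)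
  finally show ?case .
qed

section \<open>Components of G(U) and their ruling sets\<close>

definition induced_edge :: "(nat \<Rightarrow> nat \<Rightarrow> bool) \<Rightarrow> nat set \<Rightarrow> nat \<Rightarrow> nat \<Rightarrow> bool" where
  "induced_edge E U x y \<longleftrightarrow> E x y \<and> x \<in> U \<and> y \<in> U"

lemma components_induced: "components E U = {{w. (induced_edge E U)\<^sup>*\<^sup>* u w} | u. u \<in> U}"
  unfolding components_def induced_edge_def by simp

lemma component_props:
  assumes G: "simple_graph V E" and C: "C \<in> components E U"
  shows "C \<subseteq> U" "C \<noteq> {}"
    and "\<And>x y. x \<in> C \<Longrightarrow> (induced_edge E U)\<^sup>*\<^sup>* x y \<Longrightarrow> y \<in> C"
    and "\<And>x y. x \<in> C \<Longrightarrow> y \<in> C \<Longrightarrow> (induced_edge E U)\<^sup>*\<^sup>* x y"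
proof -
  let ?R = "induced_edge E U"
  obtain u where u: "u \<in> U" "C = {w. ?R\<^sup>*\<^sup>* u w}" using C unfolding components_induced by auto
  have "?R\<^sup>*\<^sup>* u w \<Longrightarrow> w \<in> U" for w
    by (induction rule: rtranclp_induct) (use u(1) in \<open>auto simp: induced_edge_def\<close>)
  thus "C \<subseteq> U" using u by blast
  show "C \<noteq> {}" using u by auto
  show "\<And>x y. x \<in> C \<Longrightarrow> ?R\<^sup>*\<^sup>* x y \<Longrightarrow> y \<in> C" using u by auto
  have sy: "symp ?R" unfolding symp_def induced_edge_def using simple_graph_sym[OF G] by blast
  show "?R\<^sup>*\<^sup>* x y" if "x \<in> C" "y \<in> C" for x y
  proof -
    have "?R\<^sup>*\<^sup>* u x" "?R\<^sup>*\<^sup>* u y" using that u by auto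
    thus ?thesis using sympD[OF symp_rtranclp[OF sy]] rtranclp_trans by metis
  qed
qed

lemma component_finite: "simple_graph V E \<Longrightarrow> U \<subseteq> V \<Longrightarrow> C \<in> components E U \<Longrightarrow> finite C"
  using component_props(1) unfolding simple_graph_def by (meson finite_subset)

definition linked :: "(nat \<Rightarrow> nat \<Rightarrow> bool) \<Rightarrow> nat set \<Rightarrow> bool" where
  "linked E S \<longleftrightarrow> (\<forall>x\<in>S. \<forall>y\<in>S. (\<lambda>a b. reach E 9 a b \<and> a \<in> S \<and> b \<in> S)\<^sup>*\<^sup>* x y)"

lemma maximal_separated_subset:
  assumes G: "simple_graph V E" and fC: "finite C"
  obtains S where "S \<subseteq> C" "separated E S" "\<forall>c\<in>C. \<exists>s\<in>S. reach E 4 c s"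
proof -
  let ?F = "{S. S \<subseteq> C \<and> separated E S}"
  have fF: "finite ?F" by (rule finite_subset[of _ "Pow C"]) (use fC in auto)
  have "{} \<in> ?F" unfolding separated_def by simp
  hence ne: "card ` ?F \<noteq> {}" by blast
  obtain S where S: "S \<in> ?F" "card S = Max (card ` ?F)"
    using Max_in[OF finite_imageI[OF fF] ne] by (metis (no_types, lifting) imageE)
  have maxS: "card S' \<le> card S" if "S' \<in> ?F" for S'
    using S(2) Max_ge[OF finite_imageI[OF fF]] that by (metis (no_types, lifting) imageI)
  have fS: "finite S" using S fC finite_subset by blast
  have "\<forall>c\<in>C. \<exists>s\<in>S. reach E 4 c s"
  proof (rule ccontr)
    assume "\<not> (\<forall>c\<in>C. \<exists>s\<in>S. reach E 4 c s)"
    then obtain c where c: "c \<in> C" "\<forall>s\<in>S. \<not> reach E 4 c s" by auto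
    have cS: "c \<notin> S" using c reach_refl by blast
    have "\<not> reach E 4 s c" if "s \<in> S" for s using c(2) that reach_sym[OF G] by blast
    hence "separated E (insert c S)" using S c(2) unfolding separated_def by auto
    hence "insert c S \<in> ?F" using S c(1) by auto
    from maxS[OF this] show False using cS fS by simp
  qed
  thus ?thesis using S that by blast
qed

text \<open>A 4-dominating subset S of a component of G(U) is 9-linked: following an induced path
  and mapping each vertex to a nearby element of S moves by at most 4 + 1 + 4 steps.\<close>
lemma dominating_subset_linked:
  assumes G: "simple_graph V E" and C: "C \<in> components E U" and SC: "S \<subseteq> C"
    and sep: "separated E S" and dom: "\<forall>c\<in>C. \<exists>s\<in>S. reach E 4 c s"
  shows "linked E S"
proof -
  define rep where "rep c = (SOME s. s \<in> S \<and> reach E 4 c s)" for c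
  have rep: "rep c \<in> S \<and> reach E 4 c (rep c)" if "c \<in> C" for c
  proof -
    have "\<exists>s. s \<in> S \<and> reach E 4 c s" using dom that by blast
    thus ?thesis unfolding rep_def by (rule someI_ex)
  qed
  have repS: "rep s = s" if sS: "s \<in> S" for s
  proof -
    have "s \<in> C" using sS SC by blast
    hence "rep s \<in> S" "reach E 4 s (rep s)" using rep by simp_all
    thus ?thesis using sep sS unfolding separated_def by metis
  qed
  define RS where "RS = (\<lambda>a b. reach E 9 a b \<and> a \<in> S \<and> b \<in> S)"
  have path: "(induced_edge E U)\<^sup>*\<^sup>* c c' \<Longrightarrow> c \<in> C \<Longrightarrow> RS\<^sup>*\<^sup>* (rep c) (rep c')" for c c'
  proof (induction rule: rtranclp_induct)
    case base thus ?case by simp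
  next
    case (step y z)
    have yC: "y \<in> C" using component_props(3)[OF G C step.prems step.hyps(1)] .
    have zC: "z \<in> C"
      using component_props(3)[OF G C step.prems rtranclp.rtrancl_into_rtrancl[OF step.hyps]] .
    have "reach E 4 (rep y) y" using reach_sym[OF G] rep[OF yC] by blast
    moreover have "E y z" using step.hyps(2) unfolding induced_edge_def by simp
    hence "reach E 1 y z" by (rule reach_edge) simp
    ultimately have "reach E (4+1) (rep y) z" using reach_trans by blast
    hence "reach E (4+1+4) (rep y) (rep z)" using reach_trans rep[OF zC] by blast
    hence "RS (rep y) (rep z)" using rep[OF yC] rep[OF zC] unfolding RS_def by simp
    thus ?case using step by (meson rtranclp.rtrancl_into_rtrancl)
  qed
  show ?thesis unfolding linked_def RS_def[symmetric]
  proof (intro ballI)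
    fix x y assume xy: "x \<in> S" "y \<in> S"
    hence "RS\<^sup>*\<^sup>* (rep x) (rep y)" using path component_props(4)[OF G C] SC by blast
    thus "RS\<^sup>*\<^sup>* x y" using repS xy by simp
  qed
qed

lemma component_ruling_set:
  assumes G: "simple_graph V E" and UV: "U \<subseteq> V" and C: "C \<in> components E U"
  obtains S where "S \<subseteq> C" "S \<noteq> {}" "separated E S" "linked E S" "\<forall>c\<in>C. \<exists>s\<in>S. reach E 4 c s"
proof -
  obtain S where S: "S \<subseteq> C" "separated E S" "\<forall>c\<in>C. \<exists>s\<in>S. reach E 4 c s"
    using maximal_separated_subset[OF G component_finite[OF G UV C]] by blast
  have "S \<noteq> {}" using S(3) component_props(2)[OF G C] by auto
  thus ?thesis using that S dominating_subset_linked[OF G C S] by blast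
qed

section \<open>Linked walks\<close>

definition walks :: "nat set \<Rightarrow> (nat \<Rightarrow> nat \<Rightarrow> bool) \<Rightarrow> nat \<Rightarrow> nat list set" where
  "walks V E L = {xs. length xs = Suc L \<and> set xs \<subseteq> V \<and> successively (reach E 9) xs}"

text \<open>There are at most n (Delta+1)^(9 L) such walks: n starting points, then at most
  (Delta+1)^9 choices per step.\<close>
lemma walks_card:
  assumes G: "simple_graph V E"
  shows "finite (walks V E L) \<and> card (walks V E L) \<le> card V * (max_degree V E + 1) ^ (9 * L)"
proof (induction L)
  case 0
  have fV: "finite V" using G unfolding simple_graph_def by auto
  have "walks V E 0 = (\<lambda>x. [x]) ` V"
  proof (intro set_eqI iffI)
    fix xs assume "xs \<in> walks V E 0"
    then obtain x where "xs = [x]" "x \<in> V" unfolding walks_def by (auto simp: length_Suc_conv)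
    thus "xs \<in> (\<lambda>x. [x]) ` V" by auto
  qed (auto simp: walks_def)
  thus ?case using fV card_image_le[OF fV, of "\<lambda>x. [x]"] by simp
next
  case (Suc L)
  let ?W = "walks V E L"
  let ?D = "max_degree V E"
  let ?ext = "\<lambda>ys. (\<lambda>x. x # ys) ` {x. reach E 9 (hd ys) x}"
  have sub: "walks V E (Suc L) \<subseteq> (\<Union>ys\<in>?W. ?ext ys)"
  proof
    fix xs assume xs: "xs \<in> walks V E (Suc L)"
    then obtain x ys where xys: "xs = x # ys" "ys \<noteq> []" unfolding walks_def
      by (cases xs) (auto simp: length_Suc_conv)
    have ys: "ys \<in> ?W" using xs xys unfolding walks_def by (auto simp: successively_Cons)
    have "reach E 9 x (hd ys)" using xs xys unfolding walks_def by (auto simp: successively_Cons)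
    hence "reach E 9 (hd ys) x" using reach_sym[OF G] by auto
    thus "xs \<in> (\<Union>ys\<in>?W. ?ext ys)" using ys xys by auto
  qed
  have hdV: "hd ys \<in> V" if "ys \<in> ?W" for ys
    using that unfolding walks_def by (cases ys) auto
  have ext: "finite (?ext ys) \<and> card (?ext ys) \<le> (?D + 1) ^ 9" if "ys \<in> ?W" for ys
    using ball_card[OF G hdV[OF that], of 9] card_image_le[of "{x. reach E 9 (hd ys) x}" "\<lambda>x. x # ys"]
    by auto
  have fin: "finite (\<Union>ys\<in>?W. ?ext ys)" using Suc ext by auto
  have "card (walks V E (Suc L)) \<le> card (\<Union>ys\<in>?W. ?ext ys)" by (rule card_mono[OF fin sub])
  also have "\<dots> \<le> (\<Sum>ys\<in>?W. card (?ext ys))" by (rule card_UN_le) (use Suc in auto)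
  also have "\<dots> \<le> (\<Sum>ys\<in>?W. (?D + 1) ^ 9)" using ext by (intro sum_mono) auto
  also have "\<dots> = card ?W * (?D + 1) ^ 9" by simp
  also have "\<dots> \<le> card V * (?D + 1) ^ (9 * L) * (?D + 1) ^ 9"
    using Suc by (intro mult_right_mono) auto
  also have "\<dots> = card V * (?D + 1) ^ (9 * Suc L)" by (simp add: power_add mult.assoc)
  finally show ?case using finite_subset[OF sub fin] by simp
qed

lemma rtranclp_exit: "R\<^sup>*\<^sup>* a b \<Longrightarrow> a \<in> W \<Longrightarrow> b \<notin> W \<Longrightarrow> \<exists>x y. R x y \<and> x \<in> W \<and> y \<notin> W"
proof (induction rule: rtranclp_induct)
  case base thus ?case by simp
next
  case (step y z) thus ?case by (cases "y \<in> W") auto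
qed

lemma successively_detour:
  "successively P (ys @ a # zs) \<Longrightarrow> P a b \<Longrightarrow> P b a \<Longrightarrow> successively P (ys @ a # b # a # zs)"
  by (induction ys) (auto simp: successively_Cons hd_append split: if_splits)

text \<open>A 9-linked set T contains, for every k up to |T|, a 9-linked walk of 2k-1 vertices
  visiting exactly k distinct vertices of T: grow a walk by detours a, b, a to a new vertex b.\<close>
lemma linked_walk:
  assumes G: "simple_graph V E" and fT: "finite T" and conn: "linked E T"
  shows "1 \<le> k \<Longrightarrow> k \<le> card T \<Longrightarrow> \<exists>xs. length xs = 2 * k - 1 \<and> set xs \<subseteq> T \<and>
      card (set xs) = k \<and> successively (reach E 9) xs"
proof (induction k rule: nat_induct_at_least)
  case base
  then obtain t where "t \<in> T" using fT by (auto simp: card_gt_0_iff Suc_le_eq)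
  thus ?case by (intro exI[of _ "[t]"]) auto
next
  case (Suc k)
  then obtain xs where xs: "length xs = 2 * k - 1" "set xs \<subseteq> T" "card (set xs) = k"
      "successively (reach E 9) xs"
    by auto
  have "set xs \<noteq> T" using xs(3) Suc.prems by auto
  then obtain z where z: "z \<in> T" "z \<notin> set xs" using xs(2) by auto
  have "xs \<noteq> []" using xs(3) Suc.hyps by auto
  then obtain w where w: "w \<in> set xs" by (cases xs) auto
  have "(\<lambda>a b. reach E 9 a b \<and> a \<in> T \<and> b \<in> T)\<^sup>*\<^sup>* w z"
    using conn w xs(2) z unfolding linked_def by auto
  from rtranclp_exit[OF this w z(2)] obtain a b where
    ab: "reach E 9 a b" "a \<in> set xs" "b \<notin> set xs" "b \<in> T"
    by auto
  from split_list[OF ab(2)] obtain ys zs where yz: "xs = ys @ a # zs" by auto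
  let ?xs = "ys @ a # b # a # zs"
  have "successively (reach E 9) ?xs"
    using successively_detour[of "reach E 9" ys a zs b] xs(4) yz ab(1) reach_sym[OF G ab(1)] by simp
  moreover have "set ?xs = insert b (set xs)" using yz by auto
  moreover have "length ?xs = 2 * Suc k - 1" using xs(1) yz Suc.hyps by auto
  ultimately show ?case using xs ab by (intro exI[of _ ?xs]) auto
qed

lemma walk_reach:
  assumes G: "simple_graph V E"
  shows "successively (reach E 9) xs \<Longrightarrow> a \<in> set xs \<Longrightarrow> b \<in> set xs \<Longrightarrow>
    reach E (9 * (length xs - 1)) a b"
proof (induction xs arbitrary: a b)
  case Nil thus ?case by simp
next
  case (Cons x ys)
  show ?case
  proof (cases "ys = []")
    case True thus ?thesis using Cons.prems reach_refl by auto
  next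
    case False
    have h: "reach E 9 x (hd ys)" "successively (reach E 9) ys"
      using Cons.prems False by (auto simp: successively_Cons)
    have hy: "hd ys \<in> set ys" using False by auto
    let ?l = "9 * (length ys - 1)"
    have L: "9 * (length (x # ys) - 1) = 9 + ?l" using False by (cases ys) auto
    have head: "reach E (9 + ?l) x c" if "c \<in> set (x # ys)" for c
    proof (cases "c = x")
      case True thus ?thesis using reach_refl by auto
    next
      case False
      hence "reach E ?l (hd ys) c" using Cons.IH h hy that by auto
      thus ?thesis using reach_trans[OF h(1)] by auto
    qed
    show ?thesis
    proof (cases "a = x \<or> b = x")
      case True
      have "reach E (9 + ?l) a b \<or> reach E (9 + ?l) b a"
        using True head Cons.prems by auto
      hence "reach E (9 + ?l) a b" using reach_sym[OF G] by blast
      thus ?thesis using L by simp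
    next
      case False
      hence "reach E ?l a b" using Cons.IH h Cons.prems by auto
      thus ?thesis using L reach_mono by (metis le_add2)
    qed
  qed
qed

section \<open>The union bound\<close>

text \<open>If every failure of a property Ok is witnessed by a 4-separated, 9-linked subset of U of
  size at least m, then Ok fails with probability at most n (Delta+1)^(9(2m-2)) (31/32)^(kappa m):
  the witness contains a linked walk with m distinct vertices, and each of the at most
  n (Delta+1)^(9(2m-2)) walks has its vertex set stay heavy with probability (31/32)^(kappa m).\<close>
lemma union_bound:
  assumes G: "simple_graph V E" and D: "max_degree V E \<ge> 1"
    and p: "p = 1 / (real (max_degree V E) + 1)" and m: "m \<ge> 1"
    and witness: "\<And>\<sigma>. \<not> Ok \<sigma> \<Longrightarrow> \<exists>S \<subseteq> U_set V E \<sigma> \<kappa>. separated E S \<and> linked E S \<and>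
        finite S \<and> m \<le> card S"
  shows "measure_pmf.prob (coins V \<kappa> p) {\<sigma>. Ok \<sigma>}
     \<ge> 1 - real (card V) * real (max_degree V E + 1) ^ (9 * (2 * m - 2)) * (31/32) ^ (\<kappa> * m)"
proof -
  let ?M = "coins V \<kappa> p"
  let ?W = "walks V E (2 * m - 2)"
  define Fam where "Fam = {xs \<in> ?W. separated E (set xs) \<and> card (set xs) = m}"
  have WC: "finite ?W" "card ?W \<le> card V * (max_degree V E + 1) ^ (9 * (2 * m - 2))"
    using walks_card[OF G] by auto
  have fF: "finite Fam" using WC(1) unfolding Fam_def by auto
  have cF: "card Fam \<le> card V * (max_degree V E + 1) ^ (9 * (2 * m - 2))"
    using card_mono[OF WC(1), of Fam] WC(2) unfolding Fam_def by auto
  have sub: "{\<sigma>. \<not> Ok \<sigma>} \<subseteq> (\<Union>xs\<in>Fam. {\<sigma>. heavy_after V E \<sigma> \<kappa> (set xs)})"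
  proof
    fix \<sigma> assume "\<sigma> \<in> {\<sigma>. \<not> Ok \<sigma>}"
    then obtain S where S: "S \<subseteq> U_set V E \<sigma> \<kappa>" "separated E S" "linked E S" "finite S" "m \<le> card S"
      using witness by blast
    obtain xs where xs: "length xs = 2 * m - 1" "set xs \<subseteq> S" "card (set xs) = m"
        "successively (reach E 9) xs"
      using linked_walk[OF G S(4) S(3) m S(5)] by blast
    have "xs \<in> ?W" unfolding walks_def using xs S(1) U_set_subset[of V E \<sigma> \<kappa>] m by auto
    hence "xs \<in> Fam" using xs(2,3) separated_subset[OF S(2)] unfolding Fam_def by auto
    moreover have "heavy_after V E \<sigma> \<kappa> (set xs)" using heavy_after_U_set S(1) xs(2) by blast
    ultimately show "\<sigma> \<in> (\<Union>xs\<in>Fam. {\<sigma>. heavy_after V E \<sigma> \<kappa> (set xs)})" by blast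
  qed
  have "measure_pmf.prob ?M {\<sigma>. \<not> Ok \<sigma>}
      \<le> measure_pmf.prob ?M (\<Union>xs\<in>Fam. {\<sigma>. heavy_after V E \<sigma> \<kappa> (set xs)})"
    by (rule measure_pmf.finite_measure_mono[OF sub]) simp
  also have "\<dots> \<le> (\<Sum>xs\<in>Fam. measure_pmf.prob ?M {\<sigma>. heavy_after V E \<sigma> \<kappa> (set xs)})"
    by (rule measure_pmf.finite_measure_subadditive_finite[OF fF]) auto
  also have "\<dots> \<le> (\<Sum>xs\<in>Fam. (31/32) ^ (\<kappa> * m))"
  proof (rule sum_mono)
    fix xs assume "xs \<in> Fam"
    hence xs: "set xs \<subseteq> V" "separated E (set xs)" "card (set xs) = m"
      unfolding Fam_def walks_def by auto
    show "measure_pmf.prob ?M {\<sigma>. heavy_after V E \<sigma> \<kappa> (set xs)} \<le> (31/32) ^ (\<kappa> * m)"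
      using heavy_after_prob[OF G D p _ xs(1,2), of \<kappa>] xs(3) by auto
  qed
  also have "\<dots> = real (card Fam) * (31/32) ^ (\<kappa> * m)" by simp
  also have "\<dots> \<le> real (card V * (max_degree V E + 1) ^ (9 * (2 * m - 2))) * (31/32) ^ (\<kappa> * m)"
    using cF by (intro mult_right_mono) (simp_all only: of_nat_le_iff, simp)
  finally have b: "measure_pmf.prob ?M {\<sigma>. \<not> Ok \<sigma>}
      \<le> real (card V) * real (max_degree V E + 1) ^ (9 * (2 * m - 2)) * (31/32) ^ (\<kappa> * m)"
    by simp
  have "measure_pmf.prob ?M {\<sigma>. Ok \<sigma>} = 1 - measure_pmf.prob ?M {\<sigma>. \<not> Ok \<sigma>}"
    using measure_pmf.prob_compl[of "{\<sigma>. \<not> Ok \<sigma>}" ?M]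
    by (simp add: Compl_eq_Diff_UNIV[symmetric] Collect_neg_eq[symmetric])
  thus ?thesis using b by simp
qed

text \<open>Converting the survival factor to base 2: (31/32)^22 \<le> 1/2.\<close>
lemma power_31_32_le: "(31/32::real) ^ j \<le> 2 powr (-(real j / 22))"
proof -
  let ?x = "2 powr (-(real j / 22)) :: real"
  have "?x ^ Suc 21 = 2 powr (real (Suc 21) * (-(real j / 22)))" by (rule powr_power) simp
  also have "\<dots> = 2 powr (- real j)" by simp
  also have "\<dots> = (1/2) ^ j" by (simp add: powr_minus_divide powr_realpow power_one_over)
  finally have x: "?x ^ Suc 21 = (1/2) ^ j" .
  have "((31/32::real) ^ j) ^ Suc 21 = ((31/32) ^ Suc 21) ^ j" by (simp only: power_mult[symmetric] mult.commute)
  also have "\<dots> \<le> (1/2) ^ j" by (intro power_mono) (simp_all add: power_divide)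
  finally have "((31/32::real) ^ j) ^ Suc 21 \<le> ?x ^ Suc 21" using x by simp
  thus ?thesis by (rule power_le_imp_le_base) simp
qed

definition phase_constant :: "real \<Rightarrow> real" where
  "phase_constant c = 22 * (36 + 16 * (c + 1))"

text \<open>The union bound is at most n^-c once Delta+1 \<le> 2^(2a), kappa \<ge> c6 a and a m \<ge> log n / 16:
  the walk count is at most 2^(36 a m), each term at most 2^(-c6 a m / 22).\<close>
lemma failure_bound:
  fixes c a :: real and m n \<kappa> \<Delta> :: nat
  assumes c: "c > 0" and a: "a \<ge> 0"
    and Dl: "real (\<Delta> + 1) \<le> 2 powr (2 * a)" and k: "real \<kappa> \<ge> phase_constant c * a"
    and am: "a * real m \<ge> log 2 (real n) / 16" and n: "n \<ge> 1"
  shows "real n * real (\<Delta> + 1) ^ (9 * (2 * m - 2)) * (31/32) ^ (\<kappa> * m) \<le> 1 / real n powr c"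
proof -
  let ?c6 = "phase_constant c"
  have h1: "real (\<Delta> + 1) ^ (9 * (2 * m - 2)) \<le> 2 powr (36 * a * real m)"
  proof -
    have "real (\<Delta> + 1) ^ (9 * (2 * m - 2)) \<le> real (\<Delta> + 1) ^ (18 * m)"
      by (intro power_increasing) auto
    also have "\<dots> \<le> (2 powr (2 * a)) ^ (18 * m)" using Dl by (intro power_mono) auto
    also have "\<dots> = 2 powr (real (18 * m) * (2 * a))" by (rule powr_power) simp
    also have "\<dots> = 2 powr (36 * a * real m)" by (simp add: algebra_simps)
    finally show ?thesis .
  qed
  have h2: "(31/32::real) ^ (\<kappa> * m) \<le> 2 powr (-(?c6 * a * real m / 22))"
  proof -
    have "(31/32::real) ^ (\<kappa> * m) \<le> 2 powr (-(real (\<kappa> * m) / 22))" by (rule power_31_32_le)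
    also have "\<dots> \<le> 2 powr (-(?c6 * a * real m / 22))"
    proof (rule powr_mono)
      have "?c6 * a * real m \<le> real \<kappa> * real m" using k by (intro mult_right_mono) auto
      thus "- (real (\<kappa> * m) / 22) \<le> - (?c6 * a * real m / 22)" by simp
    qed simp
    finally show ?thesis .
  qed
  have "real n * real (\<Delta> + 1) ^ (9 * (2 * m - 2)) * (31/32) ^ (\<kappa> * m)
      \<le> real n * (2 powr (36 * a * real m) * 2 powr (-(?c6 * a * real m / 22)))"
    using h1 h2 by (simp add: mult.assoc mult_mono)
  also have "2 powr (36 * a * real m) * 2 powr (-(?c6 * a * real m / 22))
      = 2 powr (-(16 * (c + 1) * (a * real m)))"
    unfolding powr_add[symmetric] phase_constant_def
    by (rule arg_cong[where f="\<lambda>x. 2 powr x"]) (simp add: field_simps)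
  also have "\<dots> \<le> 2 powr (-(c + 1) * log 2 (real n))"
  proof (rule powr_mono)
    have "(c + 1) * log 2 (real n) \<le> (c + 1) * (16 * (a * real m))" using am c by (intro mult_left_mono) auto
    thus "- (16 * (c + 1) * (a * real m)) \<le> - (c + 1) * log 2 (real n)" by (simp add: algebra_simps)
  qed simp
  also have "2 powr (-(c + 1) * log 2 (real n)) = (2 powr log 2 (real n)) powr (-(c + 1))"
    by (simp add: powr_powr mult.commute)
  also have "2 powr log 2 (real n) = real n" using n by simp
  finally have "real n * real (\<Delta> + 1) ^ (9 * (2 * m - 2)) * (31/32) ^ (\<kappa> * m)
      \<le> real n * real n powr (-(c + 1))"
    using n by simp
  also have "real n * real n powr (-(c + 1)) = real n powr (-c)"
  proof -
    have "real n powr (-c) = real n powr (1 + (-(c + 1)))" by simp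
    also have "\<dots> = real n powr 1 * real n powr (-(c + 1))" by (rule powr_add)
    finally show ?thesis using n by simp
  qed
  also have "\<dots> = 1 / real n powr c" by (simp add: powr_minus_divide)
  finally show ?thesis .
qed

lemma log2_ge_5: assumes "n \<ge> 32" shows "log 2 (real n) \<ge> 5"
proof -
  have "log 2 32 \<le> log 2 (real n)" using assms by (subst log_le_cancel_iff) auto
  moreover have "log 2 (32::real) = 5"
  proof -
    have "(2::real) powr 5 = 32" by (simp add: powr_numeral)
    hence "log 2 (32::real) = log 2 (2 powr 5)" by simp
    also have "\<dots> = 5" by (rule log_powr_cancel) auto
    finally show ?thesis .
  qed
  ultimately show ?thesis by simp
qed

lemma nat_ceiling_ge: "real (nat \<lceil>x\<rceil>) \<ge> x"
  by linarith

lemma nat_ceiling_le: "x \<le> real k \<Longrightarrow> nat \<lceil>x\<rceil> \<le> k"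
  by (simp add: nat_le_iff ceiling_le_iff)

section \<open>Large components yield large witness sets\<close>

text \<open>A component of weak diameter at least 5 s contains a 4-separated 9-linked set of at least
  s/4 vertices: any two of its vertices are within 4 + 9 (2k-2) + 4 of each other, where k is the
  size of a ruling set.\<close>
lemma wide_component_witness:
  assumes G: "simple_graph V E" and UV: "U \<subseteq> V" and C: "C \<in> components E U"
    and wide: "real (weak_diam E C) \<ge> 5 * s" and s: "s \<ge> 1"
  shows "\<exists>S \<subseteq> U. separated E S \<and> linked E S \<and> finite S \<and> s / 4 \<le> real (card S)"
proof -
  have fC: "finite C" using component_finite[OF G UV C] .
  obtain S where S: "S \<subseteq> C" "S \<noteq> {}" "separated E S" "linked E S" "\<forall>c\<in>C. \<exists>s\<in>S. reach E 4 c s"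
    by (rule component_ruling_set[OF G UV C])
  have fS: "finite S" using S(1) fC finite_subset by blast
  define k where "k = card S"
  have k1: "k \<ge> 1" using fS S(2) unfolding k_def by (simp add: Suc_le_eq card_gt_0_iff)
  obtain xs where xs: "length xs = 2 * k - 1" "set xs \<subseteq> S" "card (set xs) = k"
      "successively (reach E 9) xs"
    using linked_walk[OF G fS S(4) k1] unfolding k_def by auto
  have setxs: "set xs = S" using card_subset_eq[OF fS xs(2)] xs(3) unfolding k_def by simp
  have "length xs - 1 = 2 * k - 2" using xs(1) by simp
  hence within: "reach E (9 * (2 * k - 2)) a b" if "a \<in> S" "b \<in> S" for a b
    using walk_reach[OF G xs(4), of a b] that setxs by simp
  let ?Ds = "{gdist E u v | u v. u \<in> C \<and> v \<in> C}"
  have "?Ds = (\<lambda>(u,v). gdist E u v) ` (C \<times> C)" by auto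
  hence fDs: "finite ?Ds" using fC by simp
  have neDs: "?Ds \<noteq> {}" using component_props(2)[OF G C] by auto
  obtain u v where uv: "u \<in> C" "v \<in> C" "weak_diam E C = gdist E u v"
    using Max_in[OF fDs neDs] unfolding weak_diam_def by auto
  obtain su where su: "su \<in> S" "reach E 4 u su" using S(5) uv(1) by blast
  obtain sv where sv: "sv \<in> S" "reach E 4 v sv" using S(5) uv(2) by blast
  have "reach E (4 + 9 * (2 * k - 2) + 4) u v"
    using reach_trans[OF reach_trans[OF su(2) within[OF su(1) sv(1)]] reach_sym[OF G sv(2)]] .
  hence "weak_diam E C \<le> 4 + 9 * (2 * k - 2) + 4" using uv(3) gdist_le_reach by simp
  hence "5 * s \<le> 18 * real k - 10" using wide k1 by linarith
  hence "s / 4 \<le> real (card S)" using s unfolding k_def by linarith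
  thus ?thesis using S component_props(1)[OF G C] fS by blast
qed

text \<open>A component with at least Delta^4 L vertices contains a 4-separated 9-linked set of at
  least L/16 vertices: the radius-4 balls around a ruling set cover it, and each has at most
  (Delta+1)^4 \<le> 16 Delta^4 vertices.\<close>
lemma large_component_witness:
  assumes G: "simple_graph V E" and UV: "U \<subseteq> V" and C: "C \<in> components E U"
    and D2: "max_degree V E \<ge> 2" and large: "real (card C) \<ge> real (max_degree V E) ^ 4 * L"
  shows "\<exists>S \<subseteq> U. separated E S \<and> linked E S \<and> finite S \<and> L / 16 \<le> real (card S)"
proof -
  let ?\<Delta> = "max_degree V E"
  obtain S where S: "S \<subseteq> C" "separated E S" "linked E S" "\<forall>c\<in>C. \<exists>s\<in>S. reach E 4 c s"
    by (rule component_ruling_set[OF G UV C])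
  have fS: "finite S" using S(1) component_finite[OF G UV C] finite_subset by blast
  have SV: "S \<subseteq> V" using S(1) component_props(1)[OF G C] UV by blast
  have Csub: "C \<subseteq> (\<Union>t\<in>S. {y. reach E 4 t y})" using S(4) reach_sym[OF G] by blast
  have balls: "finite {y. reach E 4 t y} \<and> card {y. reach E 4 t y} \<le> (?\<Delta> + 1) ^ 4" if "t \<in> S" for t
    using ball_card[OF G] SV that by blast
  have "card C \<le> card (\<Union>t\<in>S. {y. reach E 4 t y})"
    by (rule card_mono[OF _ Csub]) (use fS balls in blast)
  also have "\<dots> \<le> (\<Sum>t\<in>S. card {y. reach E 4 t y})" by (rule card_UN_le[OF fS])
  also have "\<dots> \<le> card S * (?\<Delta> + 1) ^ 4" using sum_mono[of S _ "\<lambda>_. (?\<Delta> + 1) ^ 4"] balls by simp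
  finally have "real (card C) \<le> real (card S) * real (?\<Delta> + 1) ^ 4"
    by (metis of_nat_le_iff of_nat_mult of_nat_power)
  also have "\<dots> \<le> real (card S) * (16 * real ?\<Delta> ^ 4)"
  proof (intro mult_left_mono)
    have "real (?\<Delta> + 1) ^ 4 \<le> (2 * real ?\<Delta>) ^ 4" using D2 by (intro power_mono) auto
    thus "real (?\<Delta> + 1) ^ 4 \<le> 16 * real ?\<Delta> ^ 4" by (simp add: power_mult_distrib)
  qed simp
  finally have "real ?\<Delta> ^ 4 * L \<le> real (card S) * (16 * real ?\<Delta> ^ 4)" using large by linarith
  moreover have "real ?\<Delta> ^ 4 > 0" using D2 by simp
  ultimately have "L / 16 \<le> real (card S)" by (simp add: field_simps)
  thus ?thesis using S component_props(1)[OF G C] fS by blast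
qed

lemma degree_one_component:
  assumes G: "simple_graph V E" and D: "max_degree V E \<le> 1" and UV: "U \<subseteq> V"
    and C: "C \<in> components E U"
  shows "card C \<le> 2"
proof -
  let ?R = "induced_edge E U"
  obtain u where u: "u \<in> U" "C = {w. ?R\<^sup>*\<^sup>* u w}" using C unfolding components_induced by auto
  have uV: "u \<in> V" using u UV by auto
  have fV: "finite V" using G unfolding simple_graph_def by auto
  have nbrs: "card {x\<in>V. E y x} \<le> 1" if "y \<in> V" for y
    using degree_le_max[OF G that] D unfolding degree_def by simp
  text \<open>The only vertex adjacent to a neighbour of u is u itself.\<close>
  have "?R\<^sup>*\<^sup>* u w \<Longrightarrow> w = u \<or> E u w" for w
  proof (induction rule: rtranclp_induct)
    case base thus ?case by simp
  next
    case (step y z)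
    have Eyz: "E y z" using step.hyps(2) unfolding induced_edge_def by simp
    show ?case
    proof (cases "y = u")
      case False
      hence "E y u" using step.IH simple_graph_sym[OF G] by blast
      moreover have yV: "y \<in> V" using Eyz simple_graph_vertices[OF G] by blast
      ultimately have "z = u"
        using nbrs[OF yV] Eyz simple_graph_vertices[OF G] fV card_le_Suc0_iff_eq[of "{x\<in>V. E y x}"]
        by auto
      thus ?thesis by simp
    qed (use Eyz in simp)
  qed
  hence "C \<subseteq> insert u {x\<in>V. E u x}" using u simple_graph_vertices[OF G] by blast
  hence "card C \<le> card (insert u {x\<in>V. E u x})" using fV by (intro card_mono) auto
  also have "\<dots> \<le> Suc (card {x\<in>V. E u x})" using fV by (simp add: card_insert_if)
  also have "\<dots> \<le> 2" using nbrs[OF uV] by simp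
  finally show ?thesis .
qed

text \<open>Witnesses have m = ceil(sqrt(log n)/4) vertices,
  and Delta+1 \<le> 2^(2 sqrt(log n)) by the degree assumption.\<close>
lemma diameter_part:
  assumes c: "c > 0" and G: "simple_graph V E" and n: "card V \<ge> 32" and D: "max_degree V E \<ge> 1"
    and Db: "real (max_degree V E) \<le> 2 powr sqrt (log 2 (card V))"
    and \<kappa>: "\<kappa> = nat \<lceil>phase_constant c * sqrt (log 2 (card V))\<rceil>"
    and p: "p = 1 / (real (max_degree V E) + 1)"
  shows "measure_pmf.prob (coins V \<kappa> p)
           {\<sigma>. \<forall>C \<in> components E (U_set V E \<sigma> \<kappa>). real (weak_diam E C) < 5 * sqrt (log 2 (card V))}
         \<ge> 1 - 1 / real (card V) powr c"
proof -
  define s where "s = sqrt (log 2 (card V))"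
  define m where "m = nat \<lceil>s / 4\<rceil>"
  let ?Ok = "\<lambda>\<sigma>. \<forall>C \<in> components E (U_set V E \<sigma> \<kappa>). real (weak_diam E C) < 5 * s"
  have L5: "log 2 (card V) \<ge> 5" by (rule log2_ge_5[OF n])
  have s1: "s \<ge> 1" and ss: "s * s = log 2 (card V)" unfolding s_def using L5 by auto
  have m1: "m \<ge> 1" unfolding m_def using s1 by linarith
  have witness: "\<exists>S \<subseteq> U_set V E \<sigma> \<kappa>. separated E S \<and> linked E S \<and> finite S \<and> m \<le> card S"
    if bad: "\<not> ?Ok \<sigma>" for \<sigma>
  proof -
    obtain C where "C \<in> components E (U_set V E \<sigma> \<kappa>)" "real (weak_diam E C) \<ge> 5 * s"
      using bad by force
    from wide_component_witness[OF G U_set_subset this s1] show ?thesis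
      using nat_ceiling_le unfolding m_def by blast
  qed
  have "real (card V) * real (max_degree V E + 1) ^ (9 * (2 * m - 2)) * (31/32) ^ (\<kappa> * m)
      \<le> 1 / real (card V) powr c"
  proof (rule failure_bound[OF c])
    show "0 \<le> s" using s1 by simp
    have "real (max_degree V E + 1) \<le> 2 * 2 powr s" using Db D unfolding s_def by simp
    also have "\<dots> = 2 powr (1 + s)" by (simp add: powr_add)
    also have "\<dots> \<le> 2 powr (2 * s)" using s1 by (intro powr_mono) auto
    finally show "real (max_degree V E + 1) \<le> 2 powr (2 * s)" .
    show "phase_constant c * s \<le> real \<kappa>" unfolding \<kappa> s_def by (rule nat_ceiling_ge)
    have "s * real m \<ge> s * (s / 4)" using s1 nat_ceiling_ge[of "s / 4"] unfolding m_def
      by (intro mult_left_mono) auto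
    thus "s * real m \<ge> log 2 (real (card V)) / 16" using ss L5 by simp
  qed (use n in simp)
  moreover have "measure_pmf.prob (coins V \<kappa> p) {\<sigma>. ?Ok \<sigma>}
      \<ge> 1 - real (card V) * real (max_degree V E + 1) ^ (9 * (2 * m - 2)) * (31/32) ^ (\<kappa> * m)"
    by (rule union_bound[OF G D p m1, where Ok = ?Ok]) (rule witness)
  ultimately show ?thesis unfolding s_def by simp
qed

text \<open>Witnesses have m = ceil(log n / 16)
  vertices; for Delta = 1 the claim is trivial since components have at most 2 vertices.\<close>
lemma size_part:
  assumes c: "c > 0" and G: "simple_graph V E" and n: "card V \<ge> 32" and D: "max_degree V E \<ge> 1"
    and \<kappa>: "\<kappa> = nat \<lceil>phase_constant c * log 2 (max_degree V E)\<rceil>"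
    and p: "p = 1 / (real (max_degree V E) + 1)"
  shows "measure_pmf.prob (coins V \<kappa> p)
           {\<sigma>. \<forall>C \<in> components E (U_set V E \<sigma> \<kappa>).
                  real (card C) < real (max_degree V E) ^ 4 * log 2 (card V)}
         \<ge> 1 - 1 / real (card V) powr c"
proof -
  let ?\<Delta> = "max_degree V E" and ?L = "log 2 (card V)"
  let ?Ok = "\<lambda>\<sigma>. \<forall>C \<in> components E (U_set V E \<sigma> \<kappa>). real (card C) < real ?\<Delta> ^ 4 * ?L"
  have L5: "?L \<ge> 5" by (rule log2_ge_5[OF n])
  show ?thesis
  proof (cases "?\<Delta> = 1")
    case True
    have "?Ok \<sigma>" for \<sigma>
      using degree_one_component[OF G _ U_set_subset] True L5 by fastforce
    thus ?thesis by simp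
  next
    case False
    hence D2: "?\<Delta> \<ge> 2" using D by simp
    define a where "a = log 2 (real ?\<Delta>)"
    define m where "m = nat \<lceil>?L / 16\<rceil>"
    have a1: "a \<ge> 1" unfolding a_def using D2 by simp
    have m1: "m \<ge> 1" unfolding m_def using L5 by linarith
    have witness: "\<exists>S \<subseteq> U_set V E \<sigma> \<kappa>. separated E S \<and> linked E S \<and> finite S \<and> m \<le> card S"
      if bad: "\<not> ?Ok \<sigma>" for \<sigma>
    proof -
      obtain C where "C \<in> components E (U_set V E \<sigma> \<kappa>)" "real (card C) \<ge> real ?\<Delta> ^ 4 * ?L"
        using bad by force
      from large_component_witness[OF G U_set_subset this(1) D2 this(2)] show ?thesis
        using nat_ceiling_le unfolding m_def by blast
    qed
    have "real (card V) * real (?\<Delta> + 1) ^ (9 * (2 * m - 2)) * (31/32) ^ (\<kappa> * m)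
        \<le> 1 / real (card V) powr c"
    proof (rule failure_bound[OF c])
      show "0 \<le> a" using a1 by simp
      have two: "real ?\<Delta> \<ge> 2" using D2 by simp
      hence sq: "2 * real ?\<Delta> \<le> real ?\<Delta> * real ?\<Delta>" by (intro mult_right_mono) auto
      have "real (?\<Delta> + 1) = real ?\<Delta> + 1" by simp
      also have "\<dots> \<le> real ?\<Delta> ^ 2" using two sq unfolding power2_eq_square by linarith
      also have "\<dots> = (2 powr a) ^ 2" unfolding a_def using D2 by simp
      also have "\<dots> = 2 powr (real 2 * a)" by (rule powr_power) simp
      finally show "real (?\<Delta> + 1) \<le> 2 powr (2 * a)" by simp
      show "phase_constant c * a \<le> real \<kappa>" unfolding \<kappa> a_def by (rule nat_ceiling_ge)
      have "a * real m \<ge> 1 * real m" using a1 by (intro mult_right_mono) auto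
      thus "a * real m \<ge> ?L / 16" using nat_ceiling_ge[of "?L / 16"] unfolding m_def by simp
    qed (use n in simp)
    moreover have "measure_pmf.prob (coins V \<kappa> p) {\<sigma>. ?Ok \<sigma>}
        \<ge> 1 - real (card V) * real (?\<Delta> + 1) ^ (9 * (2 * m - 2)) * (31/32) ^ (\<kappa> * m)"
      by (rule union_bound[OF G D p m1, where Ok = ?Ok]) (rule witness)
    ultimately show ?thesis by simp
  qed
qed

text \<open>Take c6 = phase_constant c and N = 32 (so that log n \<ge> 5); both claims are the two parts
  above, instantiated with the stage numbers and selection probability of the statement.\<close>
theorem lemma5:
  fixes c :: real
  assumes "c > 0"
  shows "\<exists>c6 > 0. \<exists>N::nat. \<forall>(V::nat set) E.
     simple_graph V E \<and> card V \<ge> N \<and> max_degree V E \<ge> 1 \<and>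
     real (max_degree V E) \<le> 2 powr sqrt (log 2 (card V)) \<longrightarrow>
     (let n = card V; \<Delta> = max_degree V E; p = 1 / (real \<Delta> + 1);
          \<kappa>1 = nat \<lceil>c6 * sqrt (log 2 n)\<rceil>; \<kappa>2 = nat \<lceil>c6 * log 2 \<Delta>\<rceil>
      in measure_pmf.prob (coins V \<kappa>1 p)
           {\<sigma>. \<forall>C \<in> components E (U_set V E \<sigma> \<kappa>1).
                  real (weak_diam E C) < 5 * sqrt (log 2 n)} \<ge> 1 - 1 / real n powr c
       \<and> measure_pmf.prob (coins V \<kappa>2 p)
           {\<sigma>. \<forall>C \<in> components E (U_set V E \<sigma> \<kappa>2).
                  real (card C) < real \<Delta> ^ 4 * log 2 n} \<ge> 1 - 1 / real n powr c)"
proof -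
  have c6: "phase_constant c > 0" using assms unfolding phase_constant_def by simp
  have diameter_and_size:
    "(let n = card V; \<Delta> = max_degree V E; p = 1 / (real \<Delta> + 1);
          \<kappa>1 = nat \<lceil>phase_constant c * sqrt (log 2 n)\<rceil>; \<kappa>2 = nat \<lceil>phase_constant c * log 2 \<Delta>\<rceil>
      in measure_pmf.prob (coins V \<kappa>1 p)
           {\<sigma>. \<forall>C \<in> components E (U_set V E \<sigma> \<kappa>1).
                  real (weak_diam E C) < 5 * sqrt (log 2 n)} \<ge> 1 - 1 / real n powr c
       \<and> measure_pmf.prob (coins V \<kappa>2 p)
           {\<sigma>. \<forall>C \<in> components E (U_set V E \<sigma> \<kappa>2).
                  real (card C) < real \<Delta> ^ 4 * log 2 n} \<ge> 1 - 1 / real n powr c)"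
    if "simple_graph V E" "card V \<ge> 32" "max_degree V E \<ge> 1"
      "real (max_degree V E) \<le> 2 powr sqrt (log 2 (card V))" for V :: "nat set" and E
    unfolding Let_def
    by (rule conjI[OF diameter_part[OF assms that refl refl] size_part[OF assms that(1-3) refl refl]])
  show ?thesis
    by (intro exI[of _ "phase_constant c"] exI[of _ "32::nat"] conjI allI impI c6, elim conjE)
      (rule diameter_and_size)
qed

end
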